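(* Let $x,y\in\mathbb{R}^d$ with $\lVert x\rVert=\lVert y\rVert=1$, and let $\epsilon\in\mathbb{R}$ with $\lVert x-y\rVert\le\epsilon$. Then for every $c\in\{0,\dots,k-1\}$, $$\lvert P(\hat c_y=c)-P(\hat c_x=c)\rvert\le d\,(\epsilon^2+2\epsilon).$$
   Context: Setting. We use the following notation. - $D\ge 0$ and $K\ge 0$ are integers. Put $d=2^D$, $k'=2^K$ and $n=2^{D+K}$. The number of classes $k$ satisfies $1\le k\le k'$. - $U\in\mathbb{C}^{n\times n}$ is a fixed unitary matrix, and $\lVert\cdot\rVert$ is the Euclidean norm. - All indices start at $0$. - For a unit vector $x\in\mathbb{R}^d$, let $v=U(x\otimes e_0)$, where $e_0\in\mathbb{C}^{k'}$ is the first standard basis vector. Thus $(x\otimes e_0)_{k's}=x_s$ and all other entries of $x\otimes e_0$ are $0$. - For $c\in\{0,\dots,k-1\}$, define $P(\hat c_x=c)=\sum_{t=0}^{d-1}\lvert v_{k't+c}\rvert^2$, and likewise for $y$. *)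

theory Defs
  imports "HOL-Analysis.Analysis"
begin

text \<open>Matrices of size m x m are represented as functions nat => nat => complex,
  only the entries with indices below m being relevant; vectors as functions on nat.
  All indices start at 0.\<close>

definition unitary_mat :: "nat \<Rightarrow> (nat \<Rightarrow> nat \<Rightarrow> complex) \<Rightarrow> bool" where
  "unitary_mat m U \<longleftrightarrow>
     (\<forall>i<m. \<forall>j<m. (\<Sum>l<m. cnj (U l i) * U l j) = (if i = j then 1 else 0)) \<and>
     (\<forall>i<m. \<forall>j<m. (\<Sum>l<m. U i l * cnj (U j l)) = (if i = j then 1 else 0))"

definition vnorm :: "nat \<Rightarrow> (nat \<Rightarrow> real) \<Rightarrow> real" where
  "vnorm m x = sqrt (\<Sum>s<m. (x s)\<^sup>2)"

text \<open>Tensor product x \<otimes> e_0 in C^(d k'): entry k' s equals x s, all others 0.\<close>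
definition tensor_e0 :: "nat \<Rightarrow> nat \<Rightarrow> (nat \<Rightarrow> real) \<Rightarrow> nat \<Rightarrow> complex" where
  "tensor_e0 d k' x j = (if j mod k' = 0 \<and> j div k' < d then complex_of_real (x (j div k')) else 0)"

definition mat_vec :: "nat \<Rightarrow> (nat \<Rightarrow> nat \<Rightarrow> complex) \<Rightarrow> (nat \<Rightarrow> complex) \<Rightarrow> nat \<Rightarrow> complex" where
  "mat_vec m U w i = (\<Sum>j<m. U i j * w j)"

definition class_prob :: "nat \<Rightarrow> nat \<Rightarrow> (nat \<Rightarrow> nat \<Rightarrow> complex) \<Rightarrow> (nat \<Rightarrow> real) \<Rightarrow> nat \<Rightarrow> real" where
  "class_prob D K U x c =
     (let d = 2 ^ D; k' = 2 ^ K; n = 2 ^ (D + K);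
          v = mat_vec n U (tensor_e0 d k' x)
      in \<Sum>t<d. (cmod (v (k' * t + c)))\<^sup>2)"

end

theory Submission
  imports Defs
begin

text \<open>The vectors \<open>v\<^sub>x = U (x \<otimes> e\<^sub>0)\<close> and \<open>v\<^sub>y\<close> differ by \<open>U ((y - x) \<otimes> e\<^sub>0)\<close>. Since \<open>U\<close> is an
  isometry, every entry of \<open>v\<^sub>x\<close> has modulus at most \<open>\<parallel>x\<parallel> = 1\<close> and every entry of
  \<open>v\<^sub>y - v\<^sub>x\<close> modulus at most \<open>\<parallel>y - x\<parallel> \<le> \<epsilon>\<close>. For reals \<open>0 \<le> p \<le> 1\<close>, \<open>0 \<le> q\<close> with
  \<open>\<bar>q - p\<bar> \<le> \<epsilon>\<close> one has \<open>\<bar>q\<^sup>2 - p\<^sup>2\<bar> = \<bar>q - p\<bar> (q + p) \<le> \<epsilon> (\<epsilon> + 2)\<close>, so each of the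
  \<open>d\<close> summands of \<open>P(c\<^sub>y = c) - P(c\<^sub>x = c)\<close> is bounded by \<open>\<epsilon>\<^sup>2 + 2\<epsilon>\<close>.\<close>

lemma vnorm_diff_commute: "vnorm m (\<lambda>s. x s - y s) = vnorm m (\<lambda>s. y s - x s)"
  unfolding vnorm_def by (simp add: power2_commute)

lemma mat_vec_diff:
  "mat_vec m U w' i - mat_vec m U w i = mat_vec m U (\<lambda>j. w' j - w j) i"
  unfolding mat_vec_def by (simp add: sum_subtractf algebra_simps)

lemma unitary_mat_sum_cmod_sq_mat_vec:
  assumes "unitary_mat m U"
  shows "(\<Sum>i<m. (cmod (mat_vec m U w i))\<^sup>2) = (\<Sum>j<m. (cmod (w j))\<^sup>2)"
proof -
  have orth: "(\<Sum>i<m. U i j * cnj (U i l)) = (if l = j then 1 else 0)" if "j < m" "l < m" for j l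
    using assms that unfolding unitary_mat_def by (simp add: mult.commute)
  have "complex_of_real (\<Sum>i<m. (cmod (mat_vec m U w i))\<^sup>2)
      = (\<Sum>i<m. mat_vec m U w i * cnj (mat_vec m U w i))"
    unfolding of_real_sum by (intro sum.cong refl complex_norm_square)
  also have "\<dots> = (\<Sum>i<m. \<Sum>j<m. \<Sum>l<m. w j * cnj (w l) * (U i j * cnj (U i l)))"
    unfolding mat_vec_def cnj_sum complex_cnj_mult sum_product
    by (intro sum.cong refl) (simp only: mult_ac)
  also have "\<dots> = (\<Sum>j<m. \<Sum>l<m. \<Sum>i<m. w j * cnj (w l) * (U i j * cnj (U i l)))"
    by (subst sum.swap) (intro sum.cong refl sum.swap)
  also have "\<dots> = (\<Sum>j<m. \<Sum>l<m. w j * cnj (w l) * (if l = j then 1 else 0))"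
    by (intro sum.cong refl) (simp add: orth flip: sum_distrib_left)
  also have "\<dots> = (\<Sum>j<m. w j * cnj (w j))"
    by (simp add: if_distrib cong: if_cong)
  also have "\<dots> = complex_of_real (\<Sum>j<m. (cmod (w j))\<^sup>2)"
    unfolding of_real_sum by (intro sum.cong refl complex_norm_square[symmetric])
  finally show ?thesis
    by (simp only: of_real_eq_iff)
qed

lemma unitary_mat_cmod_mat_vec_le:
  assumes "unitary_mat m U" "i < m"
  shows "cmod (mat_vec m U w i) \<le> sqrt (\<Sum>j<m. (cmod (w j))\<^sup>2)"
proof -
  have "(cmod (mat_vec m U w i))\<^sup>2 \<le> (\<Sum>i<m. (cmod (mat_vec m U w i))\<^sup>2)"
    using assms(2) by (intro member_le_sum) auto
  then show ?thesis
    by (simp add: real_le_rsqrt unitary_mat_sum_cmod_sq_mat_vec[OF assms(1)])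
qed

lemma tensor_e0_diff:
  "(\<lambda>j. tensor_e0 d k' y j - tensor_e0 d k' x j) = tensor_e0 d k' (\<lambda>s. y s - x s)"
  unfolding tensor_e0_def by auto

lemma sum_cmod_sq_tensor_e0:
  assumes "0 < k'"
  shows "(\<Sum>j<d * k'. (cmod (tensor_e0 d k' x j))\<^sup>2) = (\<Sum>s<d. (x s)\<^sup>2)"
proof -
  have support: "(\<lambda>s. k' * s) ` {..<d} \<subseteq> {..<d * k'}"
    using assms by (auto simp: mult.commute)
  have "(\<Sum>j<d * k'. (cmod (tensor_e0 d k' x j))\<^sup>2)
      = (\<Sum>j\<in>(\<lambda>s. k' * s) ` {..<d}. (cmod (tensor_e0 d k' x j))\<^sup>2)"
    by (rule sum.mono_neutral_right[OF _ support])
      (auto simp: tensor_e0_def mult.commute elim!: dvdE simp: mod_eq_0_iff_dvd)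
  also have "\<dots> = (\<Sum>s<d. (x s)\<^sup>2)"
    using assms by (subst sum.reindex) (auto simp: inj_on_def tensor_e0_def)
  finally show ?thesis .
qed

lemma cmod_mat_vec_tensor_e0_le_vnorm:
  assumes "unitary_mat (d * k') U" "i < d * k'" "0 < k'"
  shows "cmod (mat_vec (d * k') U (tensor_e0 d k' x) i) \<le> vnorm d x"
  using unitary_mat_cmod_mat_vec_le[OF assms(1,2), of "tensor_e0 d k' x"]
  unfolding sum_cmod_sq_tensor_e0[OF assms(3)] vnorm_def .

lemma abs_power2_diff_le:
  fixes p q e :: real
  assumes "0 \<le> p" "p \<le> 1" "0 \<le> q" "\<bar>q - p\<bar> \<le> e"
  shows "\<bar>q\<^sup>2 - p\<^sup>2\<bar> \<le> e\<^sup>2 + 2 * e"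
proof -
  have "q\<^sup>2 - p\<^sup>2 = (q - p) * (q + p)"
    by (simp add: power2_eq_square algebra_simps)
  then have "\<bar>q\<^sup>2 - p\<^sup>2\<bar> = \<bar>q - p\<bar> * (q + p)"
    using assms by (simp add: abs_mult)
  also have "\<dots> \<le> e * (q + p)"
    using assms by (intro mult_right_mono) auto
  also have "\<dots> \<le> e * (e + 2)"
    using assms by (intro mult_left_mono) auto
  finally show ?thesis
    by (simp add: power2_eq_square algebra_simps)
qed

lemma abs_cmod_sq_mat_vec_tensor_e0_diff_le:
  assumes "unitary_mat (d * k') U" "i < d * k'" "0 < k'"
    and "vnorm d x = 1" and "vnorm d (\<lambda>s. x s - y s) \<le> \<epsilon>"
  shows "\<bar>(cmod (mat_vec (d * k') U (tensor_e0 d k' y) i))\<^sup>2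
           - (cmod (mat_vec (d * k') U (tensor_e0 d k' x) i))\<^sup>2\<bar> \<le> \<epsilon>\<^sup>2 + 2 * \<epsilon>"
proof -
  let ?v = "\<lambda>z. mat_vec (d * k') U (tensor_e0 d k' z) i"
  have "cmod (?v x) \<le> 1"
    using cmod_mat_vec_tensor_e0_le_vnorm[OF assms(1-3), of x] assms(4) by simp
  moreover have "\<bar>cmod (?v y) - cmod (?v x)\<bar> \<le> \<epsilon>"
  proof -
    have "\<bar>cmod (?v y) - cmod (?v x)\<bar> \<le> cmod (?v y - ?v x)"
      by (rule norm_triangle_ineq3)
    also have "?v y - ?v x = mat_vec (d * k') U (tensor_e0 d k' (\<lambda>s. y s - x s)) i"
      by (simp only: mat_vec_diff tensor_e0_diff)
    also have "cmod \<dots> \<le> vnorm d (\<lambda>s. y s - x s)"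
      by (rule cmod_mat_vec_tensor_e0_le_vnorm[OF assms(1-3)])
    finally show ?thesis
      using assms(5) vnorm_diff_commute[of d x y] by linarith
  qed
  ultimately show ?thesis
    by (intro abs_power2_diff_le) auto
qed

theorem lemma2:
  fixes D K k c :: nat and U :: "nat \<Rightarrow> nat \<Rightarrow> complex"
    and x y :: "nat \<Rightarrow> real" and \<epsilon> :: real
  assumes "1 \<le> k" and "k \<le> 2 ^ K"
    and "unitary_mat (2 ^ (D + K)) U"
    and "vnorm (2 ^ D) x = 1" and "vnorm (2 ^ D) y = 1"
    and "vnorm (2 ^ D) (\<lambda>s. x s - y s) \<le> \<epsilon>"
    and "c < k"
  shows "\<bar>class_prob D K U y c - class_prob D K U x c\<bar> \<le> real (2 ^ D) * (\<epsilon>\<^sup>2 + 2 * \<epsilon>)"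
proof -
  define d :: nat where "d = 2 ^ D"
  define k' :: nat where "k' = 2 ^ K"
  let ?p = "\<lambda>z t. (cmod (mat_vec (d * k') U (tensor_e0 d k' z) (k' * t + c)))\<^sup>2"
  have U: "unitary_mat (d * k') U"
    using assms(3) by (simp add: d_def k'_def power_add)
  have "c < k'"
    using assms(2,7) by (simp add: k'_def)
  have index: "k' * t + c < d * k'" if "t < d" for t
  proof -
    have "k' * t + c < k' * Suc t" using \<open>c < k'\<close> by simp
    also have "\<dots> \<le> k' * d" using that by (intro mult_le_mono2) simp
    finally show ?thesis by (simp add: mult.commute)
  qed
  have "\<bar>class_prob D K U y c - class_prob D K U x c\<bar> = \<bar>\<Sum>t<d. ?p y t - ?p x t\<bar>"
    by (simp add: class_prob_def Let_def d_def k'_def power_add sum_subtractf)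
  also have "\<dots> \<le> (\<Sum>t<d. \<bar>?p y t - ?p x t\<bar>)"
    by (rule sum_abs)
  also have "\<dots> \<le> (\<Sum>t<d. \<epsilon>\<^sup>2 + 2 * \<epsilon>)"
    using assms(4,6) by (intro sum_mono abs_cmod_sq_mat_vec_tensor_e0_diff_le[OF U index])
      (auto simp: d_def k'_def)
  finally show ?thesis
    by (simp add: d_def)
qed

end
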